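(* Let $G$ be a graph, $r\ge1$, and let $H$ be a minor of $G$ with minor model $(H_1,\dots,H_n)$ such that each $H_i$, $i\in\{1,\dots,n\}$, has diameter at most $\lfloor\frac{r-1}{2}\rfloor$. Then $\mathrm{degeneracy}(H)+1\le\mathrm{wcol}_r(G)$.
   Context: All graphs are finite, undirected, without loops. A path has length equal to its number of vertices minus one. For a linear ordering $L$ of $V(G)$ and $v\in V(G)$, $\mathrm{Wreach}_r(G,L,v)$ is the set of vertices $u$ such that there is a path $P$ of length at most $r$ between $u$ and $v$ with $u\preceq_L w$ for all $w\in V(P)$; $\mathrm{wcol}_r(G,L)=\max_v|\mathrm{Wreach}_r(G,L,v)|$, and $\mathrm{wcol}_r(G)$ is the minimum of $\mathrm{wcol}_r(G,L)$ over all linear orderings $L$ of $V(G)$. A graph $H$ with $V(H)=\{v_1,\dots,v_n\}$ is a minor of $G$ with minor model $(H_1,\dots,H_n)$ if $H_1,\dots,H_n$ are pairwise vertex-disjoint connected subgraphs of $G$ such that whenever $\{v_i,v_j\}\in E(H)$ there are $u_i\in V(H_i)$, $u_j\in V(H_j)$ with $\{u_i,u_j\}\in E(G)$. The diameter of a connected graph is the maximum distance (within that graph) between two of its vertices. The degeneracy of $H$ is the least $d$ such that every nonempty subgraph of $H$ has a vertex of degree at most $d$. *)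

theory Defs
  imports Main
begin

definition graph :: "'a set \<Rightarrow> 'a set set \<Rightarrow> bool" where
  "graph V E \<longleftrightarrow> finite V \<and> (\<forall>e\<in>E. \<exists>u v. u \<noteq> v \<and> u \<in> V \<and> v \<in> V \<and> e = {u, v})"

text \<open>A path in (V,E): a nonempty list of distinct vertices of V, consecutive ones adjacent.
Its length is the number of vertices minus one.\<close>
definition is_path :: "'a set \<Rightarrow> 'a set set \<Rightarrow> 'a list \<Rightarrow> bool" where
  "is_path V E P \<longleftrightarrow> P \<noteq> [] \<and> distinct P \<and> set P \<subseteq> V \<and>
     (\<forall>i. Suc i < length P \<longrightarrow> {P ! i, P ! Suc i} \<in> E)"

definition path_between :: "'a set \<Rightarrow> 'a set set \<Rightarrow> 'a list \<Rightarrow> 'a \<Rightarrow> 'a \<Rightarrow> bool" where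
  "path_between V E P u v \<longleftrightarrow> is_path V E P \<and> hd P = u \<and> last P = v"

definition subgraph :: "'a set \<Rightarrow> 'a set set \<Rightarrow> 'a set \<Rightarrow> 'a set set \<Rightarrow> bool" where
  "subgraph V' E' V E \<longleftrightarrow> V' \<subseteq> V \<and> E' \<subseteq> E \<and> (\<forall>e\<in>E'. e \<subseteq> V')"

definition connected_graph :: "'a set \<Rightarrow> 'a set set \<Rightarrow> bool" where
  "connected_graph V E \<longleftrightarrow> V \<noteq> {} \<and> (\<forall>u\<in>V. \<forall>v\<in>V. \<exists>P. path_between V E P u v)"

definition diameter_le :: "'a set \<Rightarrow> 'a set set \<Rightarrow> nat \<Rightarrow> bool" where
  "diameter_le V E k \<longleftrightarrow> (\<forall>u\<in>V. \<forall>v\<in>V. \<exists>P. path_between V E P u v \<and> length P - 1 \<le> k)"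

text \<open>Linear orderings of V are represented by lists enumerating V without repetition;
u precedes-or-equals w iff index of u \<le> index of w.\<close>
definition linear_ordering :: "'a set \<Rightarrow> 'a list \<Rightarrow> bool" where
  "linear_ordering V L \<longleftrightarrow> distinct L \<and> set L = V"

definition ord_le :: "'a list \<Rightarrow> 'a \<Rightarrow> 'a \<Rightarrow> bool" where
  "ord_le L u w \<longleftrightarrow> (\<exists>i j. i \<le> j \<and> j < length L \<and> L ! i = u \<and> L ! j = w)"

definition Wreach :: "nat \<Rightarrow> 'a set \<Rightarrow> 'a set set \<Rightarrow> 'a list \<Rightarrow> 'a \<Rightarrow> 'a set" where
  "Wreach r V E L v = {u. \<exists>P. path_between V E P u v \<and> length P - 1 \<le> r \<and>
                             (\<forall>w\<in>set P. ord_le L u w)}"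

definition wcol_ord :: "nat \<Rightarrow> 'a set \<Rightarrow> 'a set set \<Rightarrow> 'a list \<Rightarrow> nat" where
  "wcol_ord r V E L = Max ((\<lambda>v. card (Wreach r V E L v)) ` V)"

definition wcol :: "nat \<Rightarrow> 'a set \<Rightarrow> 'a set set \<Rightarrow> nat" where
  "wcol r V E = Min {wcol_ord r V E L | L. linear_ordering V L}"

definition minor_model :: "'b set \<Rightarrow> 'b set set \<Rightarrow> 'a set \<Rightarrow> 'a set set
     \<Rightarrow> ('b \<Rightarrow> 'a set) \<Rightarrow> ('b \<Rightarrow> 'a set set) \<Rightarrow> bool" where
  "minor_model VH EH V E MV ME \<longleftrightarrow>
     (\<forall>x\<in>VH. subgraph (MV x) (ME x) V E \<and> connected_graph (MV x) (ME x)) \<and>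
     (\<forall>x\<in>VH. \<forall>y\<in>VH. x \<noteq> y \<longrightarrow> MV x \<inter> MV y = {}) \<and>
     (\<forall>x y. {x, y} \<in> EH \<longrightarrow> (\<exists>u\<in>MV x. \<exists>w\<in>MV y. {u, w} \<in> E))"

definition degree_in :: "'b set set \<Rightarrow> 'b \<Rightarrow> nat" where
  "degree_in F v = card {e\<in>F. v \<in> e}"

definition degenerate_le :: "'b set \<Rightarrow> 'b set set \<Rightarrow> nat \<Rightarrow> bool" where
  "degenerate_le V E d \<longleftrightarrow>
     (\<forall>S F. subgraph S F V E \<and> S \<noteq> {} \<longrightarrow> (\<exists>v\<in>S. degree_in F v \<le> d))"

definition degeneracy :: "'b set \<Rightarrow> 'b set set \<Rightarrow> nat" where
  "degeneracy V E = (LEAST d. degenerate_le V E d)"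

end

theory Submission
  imports Defs
begin

text \<open>Order V by L and call the L-least vertex of a branch set its root. If x and y are
adjacent in H and the root of y comes first, a path from the root of y through its branch set,
across an edge into the branch set of x and on to the root of x has length at most
2((r-1) div 2) + 1 \<le> r and stays inside the two branch sets, so it never drops below the root
of y: the root of y is weakly r-reachable from the root of x. Hence the earlier neighbours of x
inject into the weakly reachable set of its root minus the root itself, and in any subgraph of H
the vertex with the latest root has degree at most wcol_r(G, L) - 1.\<close>

definition list_pos :: "'a list \<Rightarrow> 'a \<Rightarrow> nat" where
  "list_pos L x = (THE i. i < length L \<and> L ! i = x)"

lemma list_pos:
  assumes "distinct L" "x \<in> set L"
  shows "list_pos L x < length L" "L ! list_pos L x = x"
proof -
  have "\<exists>!i. i < length L \<and> L ! i = x" using distinct_Ex1[OF assms] .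
  then have "list_pos L x < length L \<and> L ! list_pos L x = x"
    unfolding list_pos_def by (rule theI')
  then show "list_pos L x < length L" "L ! list_pos L x = x" by auto
qed

lemma inj_on_list_pos: "distinct L \<Longrightarrow> inj_on (list_pos L) (set L)"
  by (metis inj_onI list_pos(2))

lemma ord_le_if_list_pos_le:
  assumes "distinct L" "u \<in> set L" "w \<in> set L" "list_pos L u \<le> list_pos L w"
  shows "ord_le L u w"
  unfolding ord_le_def using list_pos[OF assms(1)] assms(2-4) by metis

definition least_in :: "'a list \<Rightarrow> 'a set \<Rightarrow> 'a" where
  "least_in L X = L ! Min (list_pos L ` X)"

lemma least_in:
  assumes "distinct L" "X \<subseteq> set L" "X \<noteq> {}"
  shows "least_in L X \<in> X" "list_pos L (least_in L X) = Min (list_pos L ` X)"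
proof -
  have "finite X" using assms(2) finite_subset by blast
  then have "Min (list_pos L ` X) \<in> list_pos L ` X" using assms(3) by (intro Min_in) auto
  then obtain u where u: "u \<in> X" "Min (list_pos L ` X) = list_pos L u" by auto
  then have "least_in L X = u" unfolding least_in_def using list_pos[OF assms(1)] assms(2) by auto
  then show "least_in L X \<in> X" "list_pos L (least_in L X) = Min (list_pos L ` X)"
    using u by auto
qed

lemma list_pos_least_in_le:
  assumes "distinct L" "X \<subseteq> set L" "u \<in> X"
  shows "list_pos L (least_in L X) \<le> list_pos L u"
  using least_in(2)[OF assms(1,2)] assms(2,3) finite_subset by fastforce

lemma is_path_mono:
  "is_path V' E' P \<Longrightarrow> V' \<subseteq> V \<Longrightarrow> E' \<subseteq> E \<Longrightarrow> is_path V E P"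
  unfolding is_path_def by blast

lemma path_between_subgraph:
  "path_between V' E' P u v \<Longrightarrow> subgraph V' E' V E \<Longrightarrow> path_between V E P u v"
  unfolding path_between_def subgraph_def using is_path_mono by blast

lemma is_path_append:
  assumes "is_path V E P" "is_path V E Q" "set P \<inter> set Q = {}" "{last P, hd Q} \<in> E"
  shows "is_path V E (P @ Q)"
  unfolding is_path_def
proof (intro conjI allI impI)
  show "P @ Q \<noteq> []" "distinct (P @ Q)" "set (P @ Q) \<subseteq> V"
    using assms(1-3) by (auto simp: is_path_def)
  have "P \<noteq> []" "Q \<noteq> []" using assms(1,2) by (auto simp: is_path_def)
  fix i assume i: "Suc i < length (P @ Q)"
  consider "Suc i < length P" | "Suc i = length P" | "Suc i > length P" by linarith
  then show "{(P @ Q) ! i, (P @ Q) ! Suc i} \<in> E"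
  proof cases
    case 1
    then show ?thesis using assms(1) by (simp add: nth_append is_path_def)
  next
    case 2
    then have "i = length P - 1" by simp
    then have "(P @ Q) ! i = last P" "(P @ Q) ! Suc i = hd Q"
      using 2 \<open>P \<noteq> []\<close> \<open>Q \<noteq> []\<close> by (auto simp: nth_append last_conv_nth hd_conv_nth)
    then show ?thesis using assms(4) by simp
  next
    case 3
    then have "Suc (i - length P) < length Q" "Suc i - length P = Suc (i - length P)"
      using i by auto
    then show ?thesis using assms(2) 3 by (simp add: nth_append is_path_def)
  qed
qed

lemma path_between_append:
  assumes "path_between V E P u v" "path_between V E Q w z"
    "set P \<inter> set Q = {}" "{v, w} \<in> E"
  shows "path_between V E (P @ Q) u z"
  using assms is_path_append[of V E P Q] unfolding path_between_def is_path_def by auto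

lemma Wreach_subset: "Wreach r V E L v \<subseteq> V"
  unfolding Wreach_def path_between_def is_path_def by (auto dest: hd_in_set)

lemma self_in_Wreach:
  assumes "linear_ordering V L" "v \<in> V"
  shows "v \<in> Wreach r V E L v"
proof -
  have "path_between V E [v] v v" using assms(2) by (simp add: path_between_def is_path_def)
  moreover have "ord_le L v v"
    using assms ord_le_if_list_pos_le by (fastforce simp: linear_ordering_def)
  ultimately show ?thesis unfolding Wreach_def by fastforce
qed

lemma card_Wreach_le_wcol_ord:
  "finite V \<Longrightarrow> v \<in> V \<Longrightarrow> card (Wreach r V E L v) \<le> wcol_ord r V E L"
  unfolding wcol_ord_def by (intro Max_ge) auto

lemma wcol_ord_pos:
  assumes "finite V" "linear_ordering V L" "V \<noteq> {}"
  shows "wcol_ord r V E L \<ge> 1"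
proof -
  obtain v where v: "v \<in> V" using assms(3) by auto
  have "finite (Wreach r V E L v)" using finite_subset[OF Wreach_subset assms(1)] .
  then have "card (Wreach r V E L v) > 0"
    using self_in_Wreach[OF assms(2) v] by (auto simp: card_gt_0_iff)
  moreover have "card (Wreach r V E L v) \<le> wcol_ord r V E L"
    by (rule card_Wreach_le_wcol_ord[OF assms(1) v])
  ultimately show ?thesis by linarith
qed

lemma wcol_attained:
  assumes "finite V"
  obtains L where "linear_ordering V L" "wcol r V E = wcol_ord r V E L"
proof -
  have "{L. linear_ordering V L} \<subseteq> {xs. set xs \<subseteq> V \<and> length xs \<le> card V}"
    unfolding linear_ordering_def using distinct_card by fastforce
  then have "finite {L. linear_ordering V L}"
    using finite_lists_length_le[OF assms] finite_subset by blast
  moreover obtain L0 where "linear_ordering V L0"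
    using finite_distinct_list[OF assms] unfolding linear_ordering_def by blast
  ultimately have "Min (wcol_ord r V E ` {L. linear_ordering V L}) \<in> wcol_ord r V E ` {L. linear_ordering V L}"
    by (intro Min_in) auto
  moreover have "{wcol_ord r V E L | L. linear_ordering V L} = wcol_ord r V E ` {L. linear_ordering V L}"
    by auto
  ultimately have "wcol r V E \<in> wcol_ord r V E ` {L. linear_ordering V L}"
    unfolding wcol_def by simp
  then show thesis using that by blast
qed

text \<open>A graph is d-degenerate as soon as some injective ranking of its vertices gives every
vertex at most d neighbours of smaller rank: in any subgraph the vertex of largest rank has
only such neighbours.\<close>

lemma degenerate_le_if_few_earlier_neighbours:
  fixes f :: "'a \<Rightarrow> 'b::linorder"
  assumes G: "graph V E" and f: "inj_on f V"
    and few: "\<forall>v\<in>V. card {u\<in>V. {u, v} \<in> E \<and> f u < f v} \<le> d"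
  shows "degenerate_le V E d"
  unfolding degenerate_le_def
proof (intro allI impI)
  fix S F assume SF: "subgraph S F V E \<and> S \<noteq> {}"
  then have "S \<subseteq> V" "F \<subseteq> E" "\<forall>e\<in>F. e \<subseteq> S" by (auto simp: subgraph_def)
  have "finite V" using G by (simp add: graph_def)
  then have "finite S" using \<open>S \<subseteq> V\<close> finite_subset by blast
  then have "Max (f ` S) \<in> f ` S" using SF by (intro Max_in) auto
  then obtain v where v: "v \<in> S" "f v = Max (f ` S)" by auto
  define N where "N = {u\<in>V. {u, v} \<in> E \<and> f u < f v}"
  have "{e\<in>F. v \<in> e} \<subseteq> (\<lambda>u. {u, v}) ` N"
  proof
    fix e assume e: "e \<in> {e\<in>F. v \<in> e}"
    then have "e \<in> E" "e \<subseteq> S" using \<open>F \<subseteq> E\<close> \<open>\<forall>e\<in>F. e \<subseteq> S\<close> by auto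
    then obtain a b where "a \<noteq> b" "e = {a, b}" using G unfolding graph_def by blast
    then obtain u where u: "e = {u, v}" "u \<noteq> v" using e by auto
    then have "u \<in> S" using \<open>e \<subseteq> S\<close> by auto
    then have "f u \<le> f v" using v \<open>finite S\<close> by simp
    moreover have "f u \<noteq> f v"
      using inj_onD[OF f] u(2) \<open>u \<in> S\<close> \<open>v \<in> S\<close> \<open>S \<subseteq> V\<close> by blast
    ultimately have "u \<in> N" unfolding N_def using \<open>e \<in> E\<close> u \<open>u \<in> S\<close> \<open>S \<subseteq> V\<close> by auto
    then show "e \<in> (\<lambda>u. {u, v}) ` N" using u(1) by blast
  qed
  moreover have "finite N" using \<open>finite V\<close> N_def by simp
  ultimately have "degree_in F v \<le> card N"
    unfolding degree_in_def by (meson card_image_le card_mono finite_imageI le_trans)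
  also have "\<dots> \<le> d" using few v(1) \<open>S \<subseteq> V\<close> unfolding N_def by blast
  finally show "\<exists>v\<in>S. degree_in F v \<le> d" using v by blast
qed

lemma least_in_Wreach:
  assumes L: "linear_ordering V L"
    and A: "subgraph A EA V E" "diameter_le A EA d"
    and B: "subgraph B EB V E" "diameter_le B EB d"
    and AB: "A \<inter> B = {}" and r: "2 * d + 1 \<le> r"
    and edge: "u \<in> A" "w \<in> B" "{u, w} \<in> E"
    and earlier: "list_pos L (least_in L B) < list_pos L (least_in L A)"
  shows "least_in L B \<in> Wreach r V E L (least_in L A)"
proof -
  have dL: "distinct L" and "A \<subseteq> set L" "B \<subseteq> set L"
    using L A(1) B(1) by (auto simp: linear_ordering_def subgraph_def)
  have a: "least_in L A \<in> A" and b: "least_in L B \<in> B"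
    using least_in(1) dL \<open>A \<subseteq> set L\<close> \<open>B \<subseteq> set L\<close> edge by blast+
  obtain Q where Q: "path_between A EA Q u (least_in L A)" "length Q - 1 \<le> d"
    using A(2) a edge(1) unfolding diameter_le_def by blast
  obtain P where P: "path_between B EB P (least_in L B) w" "length P - 1 \<le> d"
    using B(2) b edge(2) unfolding diameter_le_def by blast
  have "set P \<subseteq> B" "set Q \<subseteq> A" "P \<noteq> []" "Q \<noteq> []"
    using P(1) Q(1) by (auto simp: path_between_def is_path_def)
  have "path_between V E (P @ Q) (least_in L B) (least_in L A)"
    using path_between_append[OF path_between_subgraph[OF P(1) B(1)]
        path_between_subgraph[OF Q(1) A(1)]] \<open>set P \<subseteq> B\<close> \<open>set Q \<subseteq> A\<close> AB edge(3)
    by (metis disjoint_iff insert_commute subsetD)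
  moreover have "length (P @ Q) - 1 \<le> r"
    using P(2) Q(2) \<open>P \<noteq> []\<close> \<open>Q \<noteq> []\<close> r by (cases P; cases Q) auto
  moreover have "ord_le L (least_in L B) z" if "z \<in> set (P @ Q)" for z
  proof -
    have "z \<in> B \<or> z \<in> A" using that \<open>set P \<subseteq> B\<close> \<open>set Q \<subseteq> A\<close> by auto
    then have "list_pos L (least_in L B) \<le> list_pos L z"
    proof
      assume "z \<in> A"
      then show ?thesis using list_pos_least_in_le[OF dL \<open>A \<subseteq> set L\<close>] earlier by fastforce
    qed (rule list_pos_least_in_le[OF dL \<open>B \<subseteq> set L\<close>])
    then show ?thesis
      using ord_le_if_list_pos_le[OF dL] \<open>z \<in> B \<or> z \<in> A\<close> b \<open>A \<subseteq> set L\<close> \<open>B \<subseteq> set L\<close> by blast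
  qed
  ultimately show ?thesis unfolding Wreach_def by blast
qed

lemma degeneracy_less_wcol_ord:
  assumes G: "graph V E" "V \<noteq> {}" and H: "graph VH EH"
    and mm: "minor_model VH EH V E MV ME"
    and dia: "\<forall>x\<in>VH. diameter_le (MV x) (ME x) d" and r: "2 * d + 1 \<le> r"
    and L: "linear_ordering V L"
  shows "degeneracy VH EH + 1 \<le> wcol_ord r V E L"
proof -
  define root where "root x = least_in L (MV x)" for x
  define c where "c = wcol_ord r V E L"
  have dL: "distinct L" and "finite V" using L G(1) by (auto simp: linear_ordering_def graph_def)
  have sub: "subgraph (MV x) (ME x) V E" "MV x \<subseteq> set L" "MV x \<noteq> {}" if "x \<in> VH" for x
    using mm that L by (auto simp: minor_model_def subgraph_def connected_graph_def linear_ordering_def)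
  have disj: "MV x \<inter> MV y = {}" if "x \<in> VH" "y \<in> VH" "x \<noteq> y" for x y
    using mm that unfolding minor_model_def by blast
  have root: "root x \<in> MV x" "root x \<in> V" if "x \<in> VH" for x
    using least_in(1)[OF dL sub(2,3)[OF that]] sub(1)[OF that] by (auto simp: root_def subgraph_def)
  have inj_root: "inj_on root VH"
  proof (rule inj_onI)
    fix x y assume xy: "x \<in> VH" "y \<in> VH" "root x = root y"
    then have "root x \<in> MV x \<inter> MV y" using root(1)[OF xy(1)] root(1)[OF xy(2)] by simp
    then show "x = y" using disj[OF xy(1,2)] by auto
  qed
  moreover have "root ` VH \<subseteq> set L" using root(2) L by (auto simp: linear_ordering_def)
  ultimately have inj_rank: "inj_on (list_pos L \<circ> root) VH"
    using comp_inj_on inj_on_subset[OF inj_on_list_pos[OF dL]] by blast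
  have "card {y\<in>VH. {y, x} \<in> EH \<and> list_pos L (root y) < list_pos L (root x)} \<le> c - 1"
    (is "card ?N \<le> _") if x: "x \<in> VH" for x
  proof -
    have "root ` ?N \<subseteq> Wreach r V E L (root x) - {root x}"
    proof
      fix z assume "z \<in> root ` ?N"
      then obtain y where y: "y \<in> VH" "{x, y} \<in> EH" "list_pos L (root y) < list_pos L (root x)"
        "z = root y" by (auto simp: insert_commute)
      then have "x \<noteq> y" by auto
      obtain u w where "u \<in> MV x" "w \<in> MV y" "{u, w} \<in> E"
        using mm y(2) unfolding minor_model_def by blast
      then have "root y \<in> Wreach r V E L (root x)"
        using least_in_Wreach[OF L sub(1) _ sub(1) _ disj r] x y \<open>x \<noteq> y\<close> dia
        unfolding root_def by blast
      then show "z \<in> Wreach r V E L (root x) - {root x}" using y by auto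
    qed
    moreover have "finite (Wreach r V E L (root x))"
      using finite_subset[OF Wreach_subset \<open>finite V\<close>] .
    ultimately have "card (root ` ?N) \<le> card (Wreach r V E L (root x) - {root x})"
      by (intro card_mono) auto
    also have "\<dots> = card (Wreach r V E L (root x)) - 1"
      using self_in_Wreach[OF L root(2)[OF x]] by (rule card_Diff_singleton)
    also have "\<dots> \<le> c - 1"
      unfolding c_def by (rule diff_le_mono, rule card_Wreach_le_wcol_ord[OF \<open>finite V\<close> root(2)[OF x]])
    moreover have "card (root ` ?N) = card ?N"
      by (rule card_image, rule inj_on_subset[OF inj_root]) blast
    ultimately show ?thesis by simp
  qed
  then have "degenerate_le VH EH (c - 1)"
    using degenerate_le_if_few_earlier_neighbours[OF H inj_rank] by simp
  then have "degeneracy VH EH \<le> c - 1" unfolding degeneracy_def by (rule Least_le)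
  moreover have "c \<ge> 1" unfolding c_def by (rule wcol_ord_pos[OF \<open>finite V\<close> L G(2)])
  ultimately show ?thesis unfolding c_def by linarith
qed

theorem lemma10:
  fixes V :: "'a set" and E :: "'a set set"
    and VH :: "'b set" and EH :: "'b set set"
    and MV :: "'b \<Rightarrow> 'a set" and ME :: "'b \<Rightarrow> 'a set set"
    and r :: nat
  assumes "graph V E" and "V \<noteq> {}"
    and "graph VH EH"
    and "r \<ge> 1"
    and "minor_model VH EH V E MV ME"
    and "\<forall>x\<in>VH. diameter_le (MV x) (ME x) ((r - 1) div 2)"
  shows "degeneracy VH EH + 1 \<le> wcol r V E"
proof -
  obtain L where L: "linear_ordering V L" "wcol r V E = wcol_ord r V E L"
    using wcol_attained assms(1) unfolding graph_def by blast
  have "2 * ((r - 1) div 2) + 1 \<le> r" using assms(4) by linarith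
  then show ?thesis using degeneracy_less_wcol_ord[OF assms(1-3,5-6) _ L(1)] L(2) by simp
qed

end
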